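(* Let $S\subset[m]$ with $\Lambda_S\neq\emptyset$. Then for every $v\in\Lambda_S$, $$\Lambda_S=\Delta_S\cap(v+K)=\{v+w\in\Delta_S: w\in K\}.$$ Consequently $\Lambda$ is contained in a finite union of translates of $K$.
   Context: $H=(V,E)$ is a finite hypergraph with $V=[m]$, $|E|=N\ge1$, hyperedges nonempty subsets of $[m]$, each vertex in at least one hyperedge. For $v\in\mathbb R^m$ and $I\in E$, $v_I=\sum_{i\in I}v_i$. $\Gamma=\{x\in\mathbb R^m:\sum_ix_i=0\}$; $I(H)$ is the $N\times m$ incidence matrix with entry $(I,i)$ equal to $1$ if $i\in I$, else $0$; $K=\ker(I(H)|_\Gamma)=\{w\in\Gamma: w_I=0\ \forall I\in E\}$. Fix $0<c<1/N$ and let $\Delta=\{x\in\mathbb R^m: x_i\ge0,\ \sum_i x_i=1,\ x_I\ge c\ \forall I\in E\}$. $L:\Delta\to\mathbb R$, $L(v)=-\sum_i v_i+\frac1N\sum_{I\in E}\log v_I$; $F_i(v)=v_i\frac{\partial L}{\partial v_i}(v)$ and $\Lambda=\{v\in\Delta:F(v)=0\}$. For $S\subset[m]$, the face $\Delta_S=\{v\in\Delta: v_i=0\iff i\notin S\}$, and $\Lambda_S=\{v\in\Delta_S:\frac{\partial L}{\partial v_i}(v)=0\ \forall i\in S\}$ (the $S$-singularities); $\Lambda=\bigcup_{S}\Lambda_S$. *)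

theory Defs
  imports "HOL-Analysis.Analysis" "HOL-Library.Function_Algebras"
begin

text \<open>Vertex set [m] is modelled by a finite type 'n (V = UNIV, m = CARD('n));
  vectors in R^m are functions 'n \<Rightarrow> real; the hypergraph is its edge set E.\<close>

definition hypergraph :: "'n::finite set set \<Rightarrow> bool" where
  "hypergraph E \<longleftrightarrow> E \<noteq> {} \<and> (\<forall>I\<in>E. I \<noteq> {}) \<and> (\<Union>E = UNIV)"

definition simplexDelta :: "'n::finite set set \<Rightarrow> real \<Rightarrow> ('n \<Rightarrow> real) set" where
  "simplexDelta E c = {x. (\<forall>i. x i \<ge> 0) \<and> (\<Sum>i\<in>UNIV. x i) = 1 \<and> (\<forall>I\<in>E. (\<Sum>i\<in>I. x i) \<ge> c)}"

definition Lfun :: "'n::finite set set \<Rightarrow> ('n \<Rightarrow> real) \<Rightarrow> real" where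
  "Lfun E v = - (\<Sum>i\<in>UNIV. v i) + (1 / real (card E)) * (\<Sum>I\<in>E. ln (\<Sum>i\<in>I. v i))"

definition partialD :: "(('n \<Rightarrow> real) \<Rightarrow> real) \<Rightarrow> ('n \<Rightarrow> real) \<Rightarrow> 'n \<Rightarrow> real" where
  "partialD f v i = deriv (\<lambda>t. f (\<lambda>j. v j + (if j = i then t else 0))) 0"

definition Ffield :: "'n::finite set set \<Rightarrow> ('n \<Rightarrow> real) \<Rightarrow> 'n \<Rightarrow> real" where
  "Ffield E v i = v i * partialD (Lfun E) v i"

definition LambdaSet :: "'n::finite set set \<Rightarrow> real \<Rightarrow> ('n \<Rightarrow> real) set" where
  "LambdaSet E c = {v \<in> simplexDelta E c. \<forall>i. Ffield E v i = 0}"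

definition face :: "'n::finite set set \<Rightarrow> real \<Rightarrow> 'n set \<Rightarrow> ('n \<Rightarrow> real) set" where
  "face E c S = {v \<in> simplexDelta E c. \<forall>i. v i = 0 \<longleftrightarrow> i \<notin> S}"

definition LambdaS :: "'n::finite set set \<Rightarrow> real \<Rightarrow> 'n set \<Rightarrow> ('n \<Rightarrow> real) set" where
  "LambdaS E c S = {v \<in> face E c S. \<forall>i\<in>S. partialD (Lfun E) v i = 0}"

definition kerK :: "'n::finite set set \<Rightarrow> ('n \<Rightarrow> real) set" where
  "kerK E = {w. (\<Sum>i\<in>UNIV. w i) = 0 \<and> (\<forall>I\<in>E. (\<Sum>i\<in>I. w i) = 0)}"

end

theory Submission
  imports Defs
begin

(* Where all edge sums are positive, the partial derivative of L in direction i is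
   -1 + g_v(i)/N with g_v(i) = sum over edges I containing i of 1/v_I, so two critical points
   u, v of the face Delta_S satisfy g_u(i) = g_v(i) for i in S, while u_i = v_i = 0 off S.
   Hence sum_i (u_i - v_i)(g_u(i) - g_v(i)) = 0; exchanging the summations turns this sum into
   sum_I (1/u_I - 1/v_I)(u_I - v_I) = - sum_I (u_I - v_I)^2/(u_I v_I), so u and v have the
   same edge sums, i.e. u - v lies in K.  Conversely the partial derivatives depend on v only
   through its edge sums.  Every point of Lambda lies in Lambda_S for S its support, and there
   are finitely many supports. *)

definition inv_edge_sum :: "'n::finite set set \<Rightarrow> ('n \<Rightarrow> real) \<Rightarrow> 'n \<Rightarrow> real" where
  "inv_edge_sum E x i = (\<Sum>I\<in>E. if i \<in> I then 1 / (\<Sum>j\<in>I. x j) else 0)"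

lemma edge_sum_pos_simplexDelta:
  assumes "x \<in> simplexDelta E c" "0 < c" "I \<in> E"
  shows "0 < (\<Sum>j\<in>I. x j)"
  using assms unfolding simplexDelta_def by force

lemma diff_in_kerK_iff:
  "u - v \<in> kerK E \<longleftrightarrow>
     (\<Sum>i\<in>UNIV. u i) = (\<Sum>i\<in>UNIV. v i) \<and> (\<forall>I\<in>E. (\<Sum>i\<in>I. u i) = (\<Sum>i\<in>I. v i))"
  by (simp add: kerK_def sum_subtractf)

lemma partialD_Lfun:
  fixes E :: "'n::finite set set"
  assumes pos: "\<forall>I\<in>E. 0 < (\<Sum>j\<in>I. v j)"
  shows "partialD (Lfun E) v i = -1 + inv_edge_sum E v i / real (card E)"
proof -
  have shift: "(\<Sum>j\<in>I. v j + (if j = i then t else 0)) = (\<Sum>j\<in>I. v j) + (if i \<in> I then t else 0)"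
    for I :: "'n set" and t
    by (simp add: sum.distrib)
  have L_line: "(\<lambda>t. Lfun E (\<lambda>j. v j + (if j = i then t else 0))) =
    (\<lambda>t. - ((\<Sum>j\<in>UNIV. v j) + t) + (1 / real (card E)) *
        (\<Sum>I\<in>E. ln ((\<Sum>j\<in>I. v j) + (if i \<in> I then t else 0))))"
    unfolding Lfun_def by (simp only: shift) simp
  have ln_edge: "((\<lambda>t. ln ((\<Sum>j\<in>I. v j) + (if i \<in> I then t else 0))) has_real_derivative
       (if i \<in> I then 1 / (\<Sum>j\<in>I. v j) else 0)) (at 0)" if "I \<in> E" for I
  proof (cases "i \<in> I")
    case True
    have "((\<lambda>t. ln ((\<Sum>j\<in>I. v j) + t)) has_real_derivative
       (1 / ((\<Sum>j\<in>I. v j) + 0)) * (0 + 1)) (at 0)"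
      using pos that by (intro derivative_eq_intros) auto
    with True show ?thesis by simp
  qed simp
  have "((\<lambda>t. - ((\<Sum>j\<in>UNIV. v j) + t) + (1 / real (card E)) *
        (\<Sum>I\<in>E. ln ((\<Sum>j\<in>I. v j) + (if i \<in> I then t else 0)))) has_real_derivative
        (- (0 + 1) + (1 / real (card E)) * inv_edge_sum E v i)) (at 0)"
    unfolding inv_edge_sum_def
    by (rule derivative_eq_intros DERIV_sum ln_edge | assumption | simp)+
  then show ?thesis unfolding partialD_def L_line by (simp add: DERIV_imp_deriv)
qed

lemma sum_diff_mult_inv_edge_sum_diff:
  fixes E :: "'n::finite set set"
  shows "(\<Sum>i\<in>UNIV. (u i - v i) * (inv_edge_sum E u i - inv_edge_sum E v i)) =
    (\<Sum>I\<in>E. (1 / (\<Sum>j\<in>I. u j) - 1 / (\<Sum>j\<in>I. v j)) * ((\<Sum>j\<in>I. u j) - (\<Sum>j\<in>I. v j)))"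
proof -
  define a where "a I = 1 / (\<Sum>j\<in>I. u j) - 1 / (\<Sum>j\<in>I. v j)" for I
  have "(\<Sum>i\<in>UNIV. (u i - v i) * (inv_edge_sum E u i - inv_edge_sum E v i)) =
      (\<Sum>i\<in>UNIV. \<Sum>I\<in>E. (u i - v i) * (if i \<in> I then a I else 0))"
    by (simp add: inv_edge_sum_def a_def sum_distrib_left sum_subtractf[symmetric] if_distrib
             cong: if_cong)
  also have "\<dots> = (\<Sum>I\<in>E. \<Sum>i\<in>UNIV. (u i - v i) * (if i \<in> I then a I else 0))"
    by (rule sum.swap)
  also have "\<dots> = (\<Sum>I\<in>E. a I * ((\<Sum>j\<in>I. u j) - (\<Sum>j\<in>I. v j)))"
    by (simp add: if_distrib[of "\<lambda>x. _ * x"] sum.If_cases mult.commute)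
      (simp add: sum_distrib_left[symmetric] sum_subtractf)
  finally show ?thesis by (simp add: a_def)
qed

lemma inv_diff_mult_diff:
  fixes p q :: real
  assumes "0 < p" "0 < q"
  shows "(1 / p - 1 / q) * (p - q) = - ((p - q)\<^sup>2 / (p * q))"
  using assms by (simp add: field_simps power2_eq_square)

lemma edge_sums_eq_if_orthogonal_inv_edge_sum:
  fixes E :: "'n::finite set set"
  assumes pos_u: "\<forall>I\<in>E. 0 < (\<Sum>j\<in>I. u j)" and pos_v: "\<forall>I\<in>E. 0 < (\<Sum>j\<in>I. v j)"
    and orth: "\<forall>i. (u i - v i) * (inv_edge_sum E u i - inv_edge_sum E v i) = 0"
    and "I \<in> E"
  shows "(\<Sum>j\<in>I. u j) = (\<Sum>j\<in>I. v j)"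
proof -
  define d where "d J = ((\<Sum>j\<in>J. u j) - (\<Sum>j\<in>J. v j))\<^sup>2 / ((\<Sum>j\<in>J. u j) * (\<Sum>j\<in>J. v j))"
    for J
  have "(\<Sum>J\<in>E. - d J) = 0"
    using sum_diff_mult_inv_edge_sum_diff[of u v E] orth pos_u pos_v
    by (simp add: d_def inv_diff_mult_diff cong: sum.cong)
  moreover have "\<forall>J\<in>E. 0 \<le> d J"
    using pos_u pos_v by (simp add: d_def less_imp_le)
  ultimately have "d I = 0"
    using sum_nonneg_eq_0_iff[of E d] \<open>I \<in> E\<close> by (simp add: sum_negf)
  then show ?thesis
    using pos_u pos_v \<open>I \<in> E\<close> by (force simp: d_def)
qed

lemma LambdaS_eq_face_inter_translate:
  assumes "0 < c" and v: "v \<in> LambdaS E c S"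
  shows "LambdaS E c S = face E c S \<inter> {v + w | w. w \<in> kerK E}"
proof -
  have face_simplex: "u \<in> simplexDelta E c" if "u \<in> face E c S" for u
    using that unfolding face_def by blast
  have pos: "\<forall>I\<in>E. 0 < (\<Sum>j\<in>I. u j)" if "u \<in> face E c S" for u
    using edge_sum_pos_simplexDelta[OF face_simplex[OF that] \<open>0 < c\<close>] by blast
  have v_face: "v \<in> face E c S" and v_crit: "\<forall>i\<in>S. partialD (Lfun E) v i = 0"
    using v unfolding LambdaS_def by auto
  have "u \<in> face E c S \<inter> {v + w | w. w \<in> kerK E}" if u: "u \<in> LambdaS E c S" for u
  proof -
    have u_face: "u \<in> face E c S" and u_crit: "\<forall>i\<in>S. partialD (Lfun E) u i = 0"
      using u unfolding LambdaS_def by auto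
    have "(u i - v i) * (inv_edge_sum E u i - inv_edge_sum E v i) = 0" for i
    proof (cases "i \<in> S")
      case True
      then have "inv_edge_sum E u i / real (card E) = 1" "inv_edge_sum E v i / real (card E) = 1"
        using u_crit v_crit partialD_Lfun[OF pos[OF u_face]] partialD_Lfun[OF pos[OF v_face]]
        by auto
      then show ?thesis
        by (simp add: divide_eq_1_iff)
    next
      case False
      then have "u i = 0" "v i = 0" using u_face v_face unfolding face_def by auto
      then show ?thesis by simp
    qed
    then have "\<forall>I\<in>E. (\<Sum>j\<in>I. u j) = (\<Sum>j\<in>I. v j)"
      using edge_sums_eq_if_orthogonal_inv_edge_sum[OF pos[OF u_face] pos[OF v_face]] by blast
    moreover have "(\<Sum>i\<in>UNIV. u i) = (\<Sum>i\<in>UNIV. v i)"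
      using face_simplex[OF u_face] face_simplex[OF v_face] unfolding simplexDelta_def by simp
    ultimately have "u - v \<in> kerK E"
      by (simp add: diff_in_kerK_iff)
    moreover have "u = v + (u - v)" by simp
    ultimately show ?thesis
      using u_face by blast
  qed
  moreover have "v + w \<in> LambdaS E c S" if vw_face: "v + w \<in> face E c S" and "w \<in> kerK E" for w
  proof -
    have "\<forall>I\<in>E. (\<Sum>j\<in>I. (v + w) j) = (\<Sum>j\<in>I. v j)"
      using diff_in_kerK_iff[of "v + w" v E] \<open>w \<in> kerK E\<close> by simp
    then have same_inv: "inv_edge_sum E (v + w) = inv_edge_sum E v"
      unfolding inv_edge_sum_def by (intro ext sum.cong) auto
    have "partialD (Lfun E) (v + w) i = partialD (Lfun E) v i" for i
      unfolding partialD_Lfun[OF pos[OF vw_face]] partialD_Lfun[OF pos[OF v_face]] same_inv ..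
    then show ?thesis
      using vw_face v_crit unfolding LambdaS_def by simp
  qed
  ultimately show ?thesis by blast
qed

lemma LambdaSet_mem_LambdaS_support:
  assumes "u \<in> LambdaSet E c"
  shows "u \<in> LambdaS E c {i. u i \<noteq> 0}"
  using assms unfolding LambdaSet_def LambdaS_def face_def Ffield_def by auto

lemma LambdaSet_subset_finite_union_translates:
  fixes E :: "'n::finite set set"
  assumes "0 < c"
  shows "\<exists>T. finite T \<and> LambdaSet E c \<subseteq> (\<Union>t\<in>T. {t + w | w. w \<in> kerK E})"
proof -
  define rep where "rep S = (SOME v. v \<in> LambdaS E c S)" for S
  have "u \<in> (\<Union>t\<in>range rep. {t + w | w. w \<in> kerK E})" if "u \<in> LambdaSet E c" for u
  proof -
    define S where "S = {i. u i \<noteq> 0}"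
    have u: "u \<in> LambdaS E c S"
      using LambdaSet_mem_LambdaS_support[OF that] by (simp add: S_def)
    then have "rep S \<in> LambdaS E c S"
      unfolding rep_def by (rule someI[where P = "\<lambda>v. v \<in> LambdaS E c S"])
    then have "u \<in> {rep S + w | w. w \<in> kerK E}"
      using LambdaS_eq_face_inter_translate[OF assms] u by blast
    then show ?thesis by blast
  qed
  moreover have "finite (range rep)" by simp
  ultimately show ?thesis by blast
qed

theorem lemma3p1:
  fixes E :: "'n::finite set set" and c :: real
  assumes "hypergraph E"
    and "0 < c" and "c < 1 / real (card E)"
  shows "(\<forall>S. LambdaS E c S \<noteq> {} \<longrightarrow>
            (\<forall>v\<in>LambdaS E c S.
               LambdaS E c S = face E c S \<inter> {v + w | w. w \<in> kerK E} \<and>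
               face E c S \<inter> {v + w | w. w \<in> kerK E} = {v + w | w. w \<in> kerK E \<and> v + w \<in> face E c S}))
       \<and> (\<exists>T. finite T \<and> LambdaSet E c \<subseteq> (\<Union>t\<in>T. {t + w | w. w \<in> kerK E}))"
proof (intro conjI allI impI ballI)
  fix S v
  assume "v \<in> LambdaS E c S"
  then show "LambdaS E c S = face E c S \<inter> {v + w | w. w \<in> kerK E}"
    by (rule LambdaS_eq_face_inter_translate[OF \<open>0 < c\<close>])
  show "face E c S \<inter> {v + w | w. w \<in> kerK E} = {v + w | w. w \<in> kerK E \<and> v + w \<in> face E c S}"
    by blast
next
  show "\<exists>T. finite T \<and> LambdaSet E c \<subseteq> (\<Union>t\<in>T. {t + w | w. w \<in> kerK E})"
    by (rule LambdaSet_subset_finite_union_translates[OF \<open>0 < c\<close>])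
qed

end
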